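(* Let $\Gamma$ be a lattice satisfying the standing assumptions below and let $\tilde\Gamma$ be its augmented lattice. A set of faces $\mathcal{E}\subseteq C_2(\Gamma)$ is a cut set in $\tilde\Gamma$ if and only if there exists a nontrivial $X$-type operator, supported in $\mathcal{E}$, which is a stabilizer or a logical operator of the 3D toric code on $\Gamma$.
   Context: $\Gamma$ is a finite, connected three-dimensional cell complex with edges $C_1(\Gamma)$ (partial edges allowed at the boundary), faces $C_2(\Gamma)$, volumes $C_3(\Gamma)$; $\partial(\nu)$ denotes the boundary faces of a volume, $\iota(e)$ the faces containing edge $e$ in their boundary, $\iota(f)$ the volumes having face $f$ in their boundary. Every face lies in the boundary of at most two volumes. Standing assumptions: (L1) $\Gamma$ has no boundaries in its interior; (L2) the boundary of every face of $\Gamma$ and of its dual $\Gamma^*$ is a closed path or an open path beginning and ending with partial edges; the dual complex is connected. The 3D toric code on $\Gamma$ has one qubit per face and stabilizer group generated by $B_e=\prod_{f\in\iota(e)}Z_f$ ($e\in C_1(\Gamma)$) and $A_\nu=\prod_{f\in\partial(\nu)}X_f$ ($\nu\in C_3(\Gamma)$); a logical operator is a Pauli operator commuting with all stabilizers but not in the stabilizer group (up to phase). A face path is a sequence of faces $\rho=(f_1,\dots,f_m)$ with pairwise distinct volumes $\Lambda(\rho)=(\nu_1,\dots,\nu_{m-1})$ such that $f_i,f_{i+1}\in\partial(\nu_i)$. Let $\mathcal{F}=\{f:|\iota(f)|=1\}$. Faces $f,f'\in\mathcal{F}$ are face-equivalent if some face path from $f$ to $f'$ gives a stabilizer $\prod_{g\in\rho}Z_g$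 (each face equivalent to itself); as in the paper this is an equivalence relation with classes $\mathcal{F}_1,\dots,\mathcal{F}_K$. The augmented lattice $\tilde\Gamma$ has the same faces as $\Gamma$ and the volumes of $\Gamma$ together with new volumes $\bar\nu_1,\dots,\bar\nu_K$ with $\partial(\bar\nu_i)=\mathcal{F}_i$. In a complex $\Delta$ (either $\Gamma$ or $\tilde\Gamma$, with face paths taken in $\Delta$), a set of faces $K$ is a cut set if there exist volumes $\nu,\nu'$ of $\Delta$ such that every face path $\rho=(f_1,\dots,f_m)$ in $\Delta$ with $f_1\in\partial(\nu)$, $f_m\in\partial(\nu')$ and $\nu,\nu'\notin\Lambda(\rho)$ satisfies $K\cap\rho\neq\emptyset$. *)

theory Defs
  imports Main
begin

text \<open>
  A three-dimensional cell complex Gamma is given combinatorially by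
  vertices Vt, edges Ed, faces Fc, volumes Vol, the endpoint map ends
  (an edge with a single endpoint is a partial edge), the map ebd giving the
  edges in the boundary of a face, and the map fbd giving the faces in the
  boundary of a volume.
\<close>

definition iota_e :: "'f set \<Rightarrow> ('f \<Rightarrow> 'e set) \<Rightarrow> 'e \<Rightarrow> 'f set" where
  "iota_e Fc ebd e = {f \<in> Fc. e \<in> ebd f}"

definition iota_f :: "'v set \<Rightarrow> ('v \<Rightarrow> 'f set) \<Rightarrow> 'f \<Rightarrow> 'v set" where
  "iota_f Vol fbd f = {v \<in> Vol. f \<in> fbd v}"

definition bdry_faces :: "'f set \<Rightarrow> 'v set \<Rightarrow> ('v \<Rightarrow> 'f set) \<Rightarrow> 'f set" where
  "bdry_faces Fc Vol fbd = {f \<in> Fc. card (iota_f Vol fbd f) = 1}"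

definition closed_path :: "('a \<Rightarrow> 'b set) \<Rightarrow> 'a set \<Rightarrow> bool" where
  "closed_path ends A \<longleftrightarrow> (\<exists>es xs. distinct es \<and> set es = A \<and> distinct xs \<and>
      length es = length xs \<and> length es \<ge> 2 \<and>
      (\<forall>i < length es. ends (es ! i) = {xs ! i, xs ! (Suc i mod length es)}))"

definition open_path :: "('a \<Rightarrow> 'b set) \<Rightarrow> 'a set \<Rightarrow> bool" where
  "open_path ends A \<longleftrightarrow> (\<exists>es xs. distinct es \<and> set es = A \<and> distinct xs \<and>
      xs \<noteq> [] \<and> length es = Suc (length xs) \<and>
      ends (es ! 0) = {xs ! 0} \<and> ends (last es) = {last xs} \<and>
      (\<forall>i. 0 < i \<and> i < length xs \<longrightarrow> ends (es ! i) = {xs ! (i - 1), xs ! i}))"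

definition path_bdry :: "('a \<Rightarrow> 'b set) \<Rightarrow> 'a set \<Rightarrow> bool" where
  "path_bdry ends A \<longleftrightarrow> closed_path ends A \<or> open_path ends A"

section \<open>Pauli operators up to phase (binary symplectic representation)\<close>

type_synonym 'f pauli = "'f set \<times> 'f set"  \<comment> \<open>(X-support, Z-support)\<close>

definition psum :: "'f pauli \<Rightarrow> 'f pauli \<Rightarrow> 'f pauli" where
  "psum p q = ((fst p - fst q) \<union> (fst q - fst p), (snd p - snd q) \<union> (snd q - snd p))"

definition commutes :: "'f pauli \<Rightarrow> 'f pauli \<Rightarrow> bool" where
  "commutes p q \<longleftrightarrow> even (card (fst p \<inter> snd q) + card (snd p \<inter> fst q))"

inductive_set gen_group :: "'f pauli set \<Rightarrow> 'f pauli set" for G where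
  one: "({}, {}) \<in> gen_group G"
| mult: "p \<in> gen_group G \<Longrightarrow> g \<in> G \<Longrightarrow> psum p g \<in> gen_group G"

text \<open>Stabilizer generators of the 3D toric code: B_e = Z on iota(e), A_v = X on the
  boundary of v.\<close>
definition tc_gens :: "'e set \<Rightarrow> 'f set \<Rightarrow> 'v set \<Rightarrow> ('f \<Rightarrow> 'e set) \<Rightarrow> ('v \<Rightarrow> 'f set)
    \<Rightarrow> 'f pauli set" where
  "tc_gens Ed Fc Vol ebd fbd =
     {({}, iota_e Fc ebd e) | e. e \<in> Ed} \<union> {(fbd v, {}) | v. v \<in> Vol}"

definition tc_stab :: "'e set \<Rightarrow> 'f set \<Rightarrow> 'v set \<Rightarrow> ('f \<Rightarrow> 'e set) \<Rightarrow> ('v \<Rightarrow> 'f set)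
    \<Rightarrow> 'f pauli set" where
  "tc_stab Ed Fc Vol ebd fbd = gen_group (tc_gens Ed Fc Vol ebd fbd)"

definition tc_logical :: "'e set \<Rightarrow> 'f set \<Rightarrow> 'v set \<Rightarrow> ('f \<Rightarrow> 'e set) \<Rightarrow> ('v \<Rightarrow> 'f set)
    \<Rightarrow> 'f pauli \<Rightarrow> bool" where
  "tc_logical Ed Fc Vol ebd fbd p \<longleftrightarrow>
     fst p \<subseteq> Fc \<and> snd p \<subseteq> Fc \<and>
     (\<forall>s \<in> tc_stab Ed Fc Vol ebd fbd. commutes p s) \<and>
     p \<notin> tc_stab Ed Fc Vol ebd fbd"

definition face_path :: "'f set \<Rightarrow> 'w set \<Rightarrow> ('w \<Rightarrow> 'f set) \<Rightarrow> 'f list \<Rightarrow> 'w list \<Rightarrow> bool" where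
  "face_path Fc W bd fs vs \<longleftrightarrow> fs \<noteq> [] \<and> length vs = length fs - 1 \<and> distinct vs \<and>
     set vs \<subseteq> W \<and> set fs \<subseteq> Fc \<and>
     (\<forall>i < length vs. fs ! i \<in> bd (vs ! i) \<and> fs ! Suc i \<in> bd (vs ! i))"

definition face_equiv :: "'e set \<Rightarrow> 'f set \<Rightarrow> 'v set \<Rightarrow> ('f \<Rightarrow> 'e set) \<Rightarrow> ('v \<Rightarrow> 'f set)
    \<Rightarrow> 'f \<Rightarrow> 'f \<Rightarrow> bool" where
  "face_equiv Ed Fc Vol ebd fbd f f' \<longleftrightarrow>
     f \<in> bdry_faces Fc Vol fbd \<and> f' \<in> bdry_faces Fc Vol fbd \<and>
     (f = f' \<or> (\<exists>fs vs. face_path Fc Vol fbd fs vs \<and> hd fs = f \<and> last fs = f' \<and>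
                   ({}, set fs) \<in> tc_stab Ed Fc Vol ebd fbd))"

text \<open>Equivalence classes F_1..F_K (of the equivalence relation generated by
  face-equivalence, which coincides with it since it is an equivalence relation).\<close>
definition face_classes :: "'e set \<Rightarrow> 'f set \<Rightarrow> 'v set \<Rightarrow> ('f \<Rightarrow> 'e set) \<Rightarrow> ('v \<Rightarrow> 'f set)
    \<Rightarrow> 'f set set" where
  "face_classes Ed Fc Vol ebd fbd =
     bdry_faces Fc Vol fbd //
       ({(a, b). face_equiv Ed Fc Vol ebd fbd a b \<or> face_equiv Ed Fc Vol ebd fbd b a})\<^sup>*"

text \<open>Augmented lattice: old volumes Inl v, new volumes Inr C for each class C.\<close>
definition aug_vols :: "'e set \<Rightarrow> 'f set \<Rightarrow> 'v set \<Rightarrow> ('f \<Rightarrow> 'e set) \<Rightarrow> ('v \<Rightarrow> 'f set)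
    \<Rightarrow> ('v + 'f set) set" where
  "aug_vols Ed Fc Vol ebd fbd = Inl ` Vol \<union> Inr ` face_classes Ed Fc Vol ebd fbd"

definition aug_bd :: "('v \<Rightarrow> 'f set) \<Rightarrow> 'v + 'f set \<Rightarrow> 'f set" where
  "aug_bd fbd w = (case w of Inl v \<Rightarrow> fbd v | Inr C \<Rightarrow> C)"

definition cut_set :: "'f set \<Rightarrow> 'w set \<Rightarrow> ('w \<Rightarrow> 'f set) \<Rightarrow> 'f set \<Rightarrow> bool" where
  "cut_set Fc W bd K \<longleftrightarrow> (\<exists>v \<in> W. \<exists>v' \<in> W. \<forall>fs vs.
      face_path Fc W bd fs vs \<and> hd fs \<in> bd v \<and> last fs \<in> bd v' \<and>
      v \<notin> set vs \<and> v' \<notin> set vs \<longrightarrow> K \<inter> set fs \<noteq> {})"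

text \<open>(L1) No boundaries in the interior, rendered homologically: every closed dual
  1-cycle avoiding the boundary faces (a set of non-boundary faces meeting every
  volume boundary in an even number of faces) is a product of the B_e,
  i.e. there are no interior holes.\<close>
definition no_interior_bdry :: "'e set \<Rightarrow> 'f set \<Rightarrow> 'v set \<Rightarrow> ('f \<Rightarrow> 'e set) \<Rightarrow> ('v \<Rightarrow> 'f set)
    \<Rightarrow> bool" where
  "no_interior_bdry Ed Fc Vol ebd fbd \<longleftrightarrow>
     (\<forall>z. z \<subseteq> Fc \<and> z \<inter> bdry_faces Fc Vol fbd = {} \<and>
          (\<forall>v \<in> Vol. even (card (z \<inter> fbd v))) \<longrightarrow>
          ({}, z) \<in> tc_stab Ed Fc Vol ebd fbd)"

definition lattice :: "'x set \<Rightarrow> 'e set \<Rightarrow> 'f set \<Rightarrow> 'v set \<Rightarrow> ('e \<Rightarrow> 'x set)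
    \<Rightarrow> ('f \<Rightarrow> 'e set) \<Rightarrow> ('v \<Rightarrow> 'f set) \<Rightarrow> bool" where
  "lattice Vt Ed Fc Vol ends ebd fbd \<longleftrightarrow>
     finite Vt \<and> finite Ed \<and> finite Fc \<and> finite Vol \<and>
     (\<forall>e \<in> Ed. ends e \<subseteq> Vt \<and> (card (ends e) = 1 \<or> card (ends e) = 2)) \<and>
     (\<forall>f \<in> Fc. ebd f \<subseteq> Ed) \<and>
     (\<forall>v \<in> Vol. fbd v \<subseteq> Fc \<and> fbd v \<noteq> {}) \<and>
     (\<forall>f \<in> Fc. card (iota_f Vol fbd f) \<le> 2) \<and>
     \<comment> \<open>Gamma connected\<close>
     Vt \<noteq> {} \<and>
     (\<forall>x \<in> Vt. \<forall>y \<in> Vt. (x, y) \<in> {(a, b). \<exists>e \<in> Ed. a \<in> ends e \<and> b \<in> ends e}\<^sup>*) \<and>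
     \<comment> \<open>dual complex connected\<close>
     Vol \<noteq> {} \<and>
     (\<forall>v \<in> Vol. \<forall>v' \<in> Vol.
        (v, v') \<in> {(a, b). a \<in> Vol \<and> b \<in> Vol \<and> fbd a \<inter> fbd b \<noteq> {}}\<^sup>*) \<and>
     \<comment> \<open>(L2) for Gamma and for the dual complex\<close>
     (\<forall>f \<in> Fc. path_bdry ends (ebd f)) \<and>
     (\<forall>e \<in> Ed. path_bdry (iota_f Vol fbd) (iota_e Fc ebd e)) \<and>
     \<comment> \<open>(L1)\<close>
     no_interior_bdry Ed Fc Vol ebd fbd"

end

theory Submission
  imports Defs
begin

(* An X-operator supported on S commutes with every B_e iff S is a mod-2 2-cycle, so the right-hand
   side says that E contains a nonempty 2-cycle.  In the augmented lattice every face lies in exactly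
   two volumes, and every dual 1-cycle of it is a product of the B_e: its boundary faces meet each
   class evenly, so a product of face-equivalence paths removes them, and (L1) handles the rest.
   If E contains a nonempty 2-cycle S and f is in S, a face path between the two volumes of f that
   avoids E closes up through f to a dual cycle meeting S only in f, contradicting commutation.
   Conversely, if E cuts v from v', the boundary of the set of volumes reachable from v without
   crossing E or entering v' is a nonempty 2-cycle inside E. *)

lemma even_card_Int_sym_diff:
  assumes "finite (C \<inter> A)" "finite (C \<inter> B)"
  shows "even (card (C \<inter> sym_diff A B)) \<longleftrightarrow> (even (card (C \<inter> A)) \<longleftrightarrow> even (card (C \<inter> B)))"
proof -
  have "card (C \<inter> A) + card (C \<inter> B) = card (C \<inter> A \<union> C \<inter> B) + card (C \<inter> A \<inter> B)"
    using card_Un_Int[OF assms] by (simp add: Int_assoc Int_left_commute)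
  also have "C \<inter> A \<union> C \<inter> B = C \<inter> sym_diff A B \<union> C \<inter> A \<inter> B"
    by blast
  also have "card \<dots> = card (C \<inter> sym_diff A B) + card (C \<inter> A \<inter> B)"
    using assms by (intro card_Un_disjoint) (auto intro: finite_subset[of _ "C \<inter> A \<union> C \<inter> B"])
  finally show ?thesis
    by presburger
qed

lemma commutes_sym: "commutes p q \<longleftrightarrow> commutes q p"
  by (simp add: commutes_def Int_commute add.commute)

lemma commutes_psum:
  assumes "finite (fst q)" "finite (snd q)"
  shows "commutes q (psum p r) \<longleftrightarrow> (commutes q p \<longleftrightarrow> commutes q r)"
  using assms
  by (simp add: commutes_def psum_def even_card_Int_sym_diff) blast

lemma commutes_gen_group:
  assumes "finite (fst q)" "finite (snd q)" "\<And>g. g \<in> G \<Longrightarrow> commutes q g"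
    and "p \<in> gen_group G"
  shows "commutes q p"
  using assms(4)
proof induction
  case one
  show ?case by (simp add: commutes_def)
next
  case (mult p g)
  then show ?case using assms(1-3) by (simp add: commutes_psum)
qed

lemma gen_group_psum:
  assumes "p \<in> gen_group G" "q \<in> gen_group G"
  shows "psum p q \<in> gen_group G"
  using assms(2)
proof induction
  case one
  show ?case using assms(1) by (simp add: psum_def)
next
  case (mult q g)
  have "psum p (psum q g) = psum (psum p q) g"
    by (auto simp: psum_def)
  then show ?case using mult by (simp add: gen_group.mult)
qed

lemma gen_group_generator: "g \<in> G \<Longrightarrow> g \<in> gen_group G"
  using gen_group.mult[OF gen_group.one] by (simp add: psum_def)

lemma even_card_switches_iff:
  "even (card {i. i < m \<and> Q i \<noteq> Q (Suc i)}) \<longleftrightarrow> (Q 0 \<longleftrightarrow> Q m)"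
proof (induction m)
  case (Suc m)
  have "{i. i < Suc m \<and> Q i \<noteq> Q (Suc i)} =
      {i. i < m \<and> Q i \<noteq> Q (Suc i)} \<union> {i. i = m \<and> Q m \<noteq> Q (Suc m)}"
    by (auto simp: less_Suc_eq)
  then show ?case using Suc by (cases "Q m \<noteq> Q (Suc m)") auto
qed simp

lemma even_card_by_switches:
  assumes "distinct es" "\<And>i. i < length es \<Longrightarrow> P (es ! i) \<longleftrightarrow> Q i \<noteq> Q (Suc i)"
    and "Q 0 \<longleftrightarrow> Q (length es)"
  shows "even (card {g \<in> set es. P g})"
proof -
  have "{g \<in> set es. P g} = (!) es ` {i. i < length es \<and> Q i \<noteq> Q (Suc i)}"
    using assms(2) by (auto simp: in_set_conv_nth)
  moreover have "inj_on ((!) es) {i. i < length es \<and> Q i \<noteq> Q (Suc i)}"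
    using assms(1) by (auto simp: inj_on_def nth_eq_iff_index_eq)
  ultimately show ?thesis
    using assms(3) even_card_switches_iff[of "length es" Q] by (simp add: card_image)
qed

definition mod2_sum :: "'a list \<Rightarrow> 'a set" where
  "mod2_sum xs = {x. odd (count_list xs x)}"

lemma mod2_sum_subset: "mod2_sum xs \<subseteq> set xs"
  unfolding mod2_sum_def by (metis (mono_tags) count_notin even_zero mem_Collect_eq subsetI)

lemma mod2_sum_Cons: "mod2_sum (x # xs) = sym_diff (mod2_sum xs) {x}"
  by (auto simp: mod2_sum_def)

lemma even_card_Int_mod2_sum:
  "even (card (C \<inter> mod2_sum xs)) \<longleftrightarrow> even (length (filter (\<lambda>x. x \<in> C) xs))"
proof (induction xs)
  case Nil
  show ?case by (simp add: mod2_sum_def)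
next
  case (Cons x xs)
  have "finite (C \<inter> mod2_sum xs)"
    using finite_subset[OF mod2_sum_subset finite_set] by blast
  then show ?case
    using Cons by (simp add: mod2_sum_Cons even_card_Int_sym_diff Int_insert_right)
qed

lemma sym_diff_singletons_rtrancl:
  assumes Q: "{} \<in> Q" "\<And>A B. A \<in> Q \<Longrightarrow> B \<in> Q \<Longrightarrow> sym_diff A B \<in> Q"
    and pair: "\<And>a b. (a, b) \<in> r \<Longrightarrow> a \<noteq> b \<Longrightarrow> {a, b} \<in> Q"
    and "(x, y) \<in> r\<^sup>*"
  shows "sym_diff {x} {y} \<in> Q"
  using assms(4)
proof induction
  case base
  show ?case using Q(1) by simp
next
  case (step a b)
  have "sym_diff {a} {b} \<in> Q"
    using pair[OF step.hyps(2)] Q(1) by (cases "a = b") (auto simp: insert_commute)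
  moreover have "sym_diff {x} {b} = sym_diff (sym_diff {x} {a}) (sym_diff {a} {b})"
    by auto
  ultimately show ?case using Q(2)[OF step.IH] by simp
qed

lemma sym_diff_closed_even_sets:
  assumes Q: "{} \<in> Q" "\<And>A B. A \<in> Q \<Longrightarrow> B \<in> Q \<Longrightarrow> sym_diff A B \<in> Q"
    and pair: "\<And>a b. (a, b) \<in> r \<Longrightarrow> a \<noteq> b \<Longrightarrow> {a, b} \<in> Q"
    and "sym r" "finite T" "\<forall>x \<in> T. even (card (T \<inter> r\<^sup>* `` {x}))"
  shows "T \<in> Q"
  using assms(5,6)
proof (induction "card T" arbitrary: T rule: less_induct)
  case less
  show ?case
  proof (cases "T = {}")
    case True
    then show ?thesis using Q(1) by simp
  next
    case False
    then obtain a where a: "a \<in> T" by blast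
    have "a \<in> T \<inter> r\<^sup>* `` {a}" "T \<inter> r\<^sup>* `` {a} \<noteq> {a}"
      using a less.prems(2) by auto
    then obtain b where b: "b \<in> T" "(a, b) \<in> r\<^sup>*" "b \<noteq> a"
      by blast
    have sym: "(x, y) \<in> r\<^sup>* \<longleftrightarrow> (y, x) \<in> r\<^sup>*" for x y
      using sym_rtrancl[OF \<open>sym r\<close>] by (auto dest: symD)
    define T' where "T' = T - {a, b}"
    have "even (card (T' \<inter> r\<^sup>* `` {x}))" if "x \<in> T'" for x
    proof (cases "(x, a) \<in> r\<^sup>*")
      case True
      then have "(x, b) \<in> r\<^sup>*" using b(2) by (rule rtrancl_trans)
      then have "T' \<inter> r\<^sup>* `` {x} = (T \<inter> r\<^sup>* `` {x}) - {a, b}" "{a, b} \<subseteq> T \<inter> r\<^sup>* `` {x}"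
        using True a b(1) by (auto simp: T'_def)
      then show ?thesis
        using less.prems that b(3) by (simp add: card_Diff_subset T'_def)
    next
      case False
      then have "(x, b) \<notin> r\<^sup>*" using b(2) sym by (meson rtrancl_trans)
      then have "T' \<inter> r\<^sup>* `` {x} = T \<inter> r\<^sup>* `` {x}"
        using False by (auto simp: T'_def)
      then show ?thesis using less.prems that by (simp add: T'_def)
    qed
    moreover have "card T' < card T"
      using less.prems(1) a unfolding T'_def by (intro psubset_card_mono) auto
    ultimately have "T' \<in> Q"
      using less by (simp add: T'_def)
    moreover have "T = sym_diff T' (sym_diff {a} {b})"
      using a b by (auto simp: T'_def)
    ultimately show ?thesis
      using Q(2) sym_diff_singletons_rtrancl[OF Q pair b(2)] by simp
  qed
qed

lemma rtrancl_crossing: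
  assumes "(x, y) \<in> r\<^sup>*" "x \<in> P" "y \<notin> P"
  obtains a b where "(a, b) \<in> r" "a \<in> P" "b \<notin> P"
  using assms by (induction rule: rtrancl_induct) blast+

lemma open_pathE:
  assumes "open_path ends A"
  obtains es xs where "distinct es" "set es = A" "distinct xs" "xs \<noteq> []"
    "length es = Suc (length xs)"
    "\<And>i x. i < length es \<Longrightarrow>
       x \<in> ends (es ! i) \<longleftrightarrow> (0 < i \<and> x = xs ! (i - 1)) \<or> (i < length xs \<and> x = xs ! i)"
proof -
  obtain es xs where path: "distinct es" "set es = A" "distinct xs" "xs \<noteq> []"
    "length es = Suc (length xs)" and first: "ends (es ! 0) = {xs ! 0}"
    and final: "ends (last es) = {last xs}"
    and inner: "\<forall>i. 0 < i \<and> i < length xs \<longrightarrow> ends (es ! i) = {xs ! (i - 1), xs ! i}"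
    using assms unfolding open_path_def by blast
  have final': "ends (es ! length xs) = {xs ! (length xs - 1)}"
    using final path(4,5) by (metis last_conv_nth length_0_conv lessI nat.distinct(1) diff_Suc_1)
  then have "x \<in> ends (es ! i) \<longleftrightarrow> (0 < i \<and> x = xs ! (i - 1)) \<or> (i < length xs \<and> x = xs ! i)"
    if i: "i < length es" for i x
  proof -
    consider "i = 0" | "i = length xs" | "0 < i" "i < length xs"
      using i path(5) by (cases "i = 0"; cases "i = length xs") auto
    then show ?thesis
      using first inner final' path(4) by cases auto
  qed
  with path show thesis by (rule that)
qed

lemma closed_pathE:
  assumes "closed_path ends A"
  obtains es xs where "distinct es" "set es = A" "length es = length xs"
    "\<And>i. i < length es \<Longrightarrow> ends (es ! i) = {xs ! i, xs ! (Suc i mod length es)}"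
    "\<And>i. i < length es \<Longrightarrow> xs ! i \<noteq> xs ! (Suc i mod length es)"
proof -
  obtain es xs where path: "distinct es" "set es = A" "distinct xs" "length es = length xs"
    "length es \<ge> 2" and ends: "\<forall>i < length es. ends (es ! i) = {xs ! i, xs ! (Suc i mod length es)}"
    using assms unfolding closed_path_def by blast
  have "xs ! i \<noteq> xs ! (Suc i mod length es)" if "i < length es" for i
  proof -
    have "i \<noteq> Suc i mod length es"
      using that path(5) by (cases "Suc i = length es") auto
    then show ?thesis
      using that path(3,4,5) by (subst nth_eq_iff_index_eq) (auto intro: mod_less_divisor)
  qed
  with path ends show thesis by (intro that) auto
qed

lemma path_bdry_even:
  assumes "path_bdry ends A"
  shows "even (card {g \<in> A. x \<in> ends g})"
  using assms unfolding path_bdry_def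
proof
  assume "closed_path ends A"
  then obtain es xs where path: "distinct es" "set es = A"
    and ends: "\<And>i. i < length es \<Longrightarrow> ends (es ! i) = {xs ! i, xs ! (Suc i mod length es)}"
    and step: "\<And>i. i < length es \<Longrightarrow> xs ! i \<noteq> xs ! (Suc i mod length es)"
    by (rule closed_pathE) blast
  define n where "n = length es"
  have switch: "x \<in> ends (es ! i) \<longleftrightarrow> (x = xs ! (i mod n)) \<noteq> (x = xs ! (Suc i mod n))"
    if "i < n" for i
    using that ends[of i] step[of i] unfolding n_def by auto
  have "even (card {g \<in> set es. x \<in> ends g})"
    by (rule even_card_by_switches[OF path(1), where Q = "\<lambda>k. x = xs ! (k mod n)"])
      (use switch in \<open>simp_all add: n_def\<close>)
  then show ?thesis using path(2) by simp
next
  assume "open_path ends A"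
  then obtain es xs where path: "distinct es" "set es = A" "distinct xs" "xs \<noteq> []"
    "length es = Suc (length xs)"
    and ends: "\<And>i x. i < length es \<Longrightarrow>
       x \<in> ends (es ! i) \<longleftrightarrow> (0 < i \<and> x = xs ! (i - 1)) \<or> (i < length xs \<and> x = xs ! i)"
    by (rule open_pathE) blast
  define Q where "Q k \<longleftrightarrow> 0 < k \<and> k \<le> length xs \<and> x = xs ! (k - 1)" for k
  have switch: "x \<in> ends (es ! i) \<longleftrightarrow> Q i \<noteq> Q (Suc i)" if "i < length es" for i
    using that path(3,5) ends[OF that] unfolding Q_def
    by (auto simp: nth_eq_iff_index_eq)
  have "even (card {g \<in> set es. x \<in> ends g})"
    by (rule even_card_by_switches[OF path(1), where Q = Q]) (use switch path(5) in \<open>simp_all add: Q_def\<close>)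
  then show ?thesis using path(2) by simp
qed

lemma path_bdry_nonempty: "path_bdry ends A \<Longrightarrow> A \<noteq> {}"
  unfolding path_bdry_def closed_path_def open_path_def by auto

lemma path_bdry_ends_nonempty:
  assumes "path_bdry ends A" "g \<in> A"
  shows "ends g \<noteq> {}"
  using assms(1) unfolding path_bdry_def
proof
  assume "closed_path ends A"
  then obtain es xs where "set es = A"
    "\<And>i. i < length es \<Longrightarrow> ends (es ! i) = {xs ! i, xs ! (Suc i mod length es)}"
    by (rule closed_pathE) blast
  then show ?thesis using assms(2) by (auto simp: in_set_conv_nth)
next
  assume "open_path ends A"
  then obtain es xs where path: "set es = A" "xs \<noteq> []" "length es = Suc (length xs)"
    and ends: "\<And>i x. i < length es \<Longrightarrow>
       x \<in> ends (es ! i) \<longleftrightarrow> (0 < i \<and> x = xs ! (i - 1)) \<or> (i < length xs \<and> x = xs ! i)"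
    by (rule open_pathE) blast
  obtain i where i: "i < length es" "g = es ! i"
    using assms(2) path(1) by (auto simp: in_set_conv_nth)
  show ?thesis
  proof (cases "i < length xs")
    case True
    then show ?thesis using ends[OF i(1), of "xs ! i"] i(2) by auto
  next
    case False
    then show ?thesis using ends[OF i(1), of "xs ! (i - 1)"] i path(2,3) by auto
  qed
qed

lemma closed_path_card_ends: "closed_path ends A \<Longrightarrow> g \<in> A \<Longrightarrow> card (ends g) = 2"
  by (erule closed_pathE) (auto simp: in_set_conv_nth)

lemma open_path_face_path:
  assumes "open_path (iota_f W bd) A" "A \<subseteq> Fc"
  obtains fs vs where "face_path Fc W bd fs vs" "set fs = A" "hd fs \<noteq> last fs"
    "card (iota_f W bd (hd fs)) = 1" "card (iota_f W bd (last fs)) = 1"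
proof -
  obtain fs vs where path: "distinct fs" "set fs = A" "distinct vs" "vs \<noteq> []"
    "length fs = Suc (length vs)"
    and ends: "\<And>i w. i < length fs \<Longrightarrow> w \<in> iota_f W bd (fs ! i) \<longleftrightarrow>
       (0 < i \<and> w = vs ! (i - 1)) \<or> (i < length vs \<and> w = vs ! i)"
    using assms(1) by (rule open_pathE) blast
  have "vs ! i \<in> iota_f W bd (fs ! i) \<and> vs ! i \<in> iota_f W bd (fs ! Suc i)" if "i < length vs" for i
    using that ends[of i] ends[of "Suc i"] path(5) by simp
  then have "face_path Fc W bd fs vs"
    using path assms(2) by (auto simp: face_path_def iota_f_def in_set_conv_nth)
  moreover have hd_last: "hd fs = fs ! 0" "last fs = fs ! length vs"
    using path(5) hd_conv_nth[of fs] last_conv_nth[of fs] by (metis Zero_not_Suc diff_Suc_1 list.size(3))+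
  moreover have "iota_f W bd (hd fs) = {vs ! 0}" "iota_f W bd (last fs) = {vs ! (length vs - 1)}"
    unfolding hd_last using ends[of 0] ends[of "length vs"] path(4,5) by auto
  moreover have "hd fs \<noteq> last fs"
    unfolding hd_last using path(1,4,5) by (simp add: nth_eq_iff_index_eq)
  ultimately show thesis using path(2) by (intro that) auto
qed

lemma face_path_inner_face:
  assumes "face_path Fc W bd fs vs" "g \<in> set fs" "g \<noteq> hd fs" "g \<noteq> last fs"
  shows "\<exists>w \<in> iota_f W bd g. \<exists>w' \<in> iota_f W bd g. w \<noteq> w'"
proof -
  have path: "fs \<noteq> []" "length vs = length fs - 1" "distinct vs" "set vs \<subseteq> W"
    "\<And>i. i < length vs \<Longrightarrow> fs ! i \<in> bd (vs ! i) \<and> fs ! Suc i \<in> bd (vs ! i)"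
    using assms(1) unfolding face_path_def by auto
  obtain i where i: "i < length fs" "g = fs ! i"
    using assms(2) by (auto simp: in_set_conv_nth)
  have "g \<noteq> fs ! 0" "g \<noteq> fs ! (length fs - 1)"
    using assms(3,4) path(1) by (simp_all add: hd_conv_nth last_conv_nth)
  then have "i \<noteq> 0" "i \<noteq> length fs - 1"
    using i(2) by metis+
  then have "0 < i" "i < length vs"
    using i(1) path(2) by auto
  then have "vs ! (i - 1) \<in> iota_f W bd g" "vs ! i \<in> iota_f W bd g" "vs ! (i - 1) \<noteq> vs ! i"
    using path(3,4) path(5)[of i] path(5)[of "i - 1"] i(2)
    by (auto simp: iota_f_def nth_eq_iff_index_eq)
  then show ?thesis by blast
qed

lemma face_path_extend:
  assumes path: "face_path Fc W bd fs vs" and w: "w \<in> W" "last fs \<in> bd w"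
    and f: "f \<in> bd w" "f \<in> Fc"
  obtains fs' vs' where "face_path Fc W bd fs' vs'" "hd fs' = hd fs" "last fs' = f"
    "set fs' \<subseteq> insert f (set fs)" "set vs' \<subseteq> insert w (set vs)"
proof -
  \<comment> \<open>cut the path at the first visit of w, if any, and then step through w to f\<close>
  define k where "k = length (takeWhile (\<lambda>u. u \<noteq> w) vs)"
  define fs' where "fs' = take (Suc k) fs @ [f]"
  define vs' where "vs' = take k vs @ [w]"
  have P: "fs \<noteq> []" "length vs = length fs - 1" "distinct vs" "set vs \<subseteq> W" "set fs \<subseteq> Fc"
    "\<And>i. i < length vs \<Longrightarrow> fs ! i \<in> bd (vs ! i) \<and> fs ! Suc i \<in> bd (vs ! i)"
    using path unfolding face_path_def by auto
  have k: "k \<le> length vs" "w \<notin> set (take k vs)" "k < length vs \<Longrightarrow> vs ! k = w"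
    unfolding k_def using length_takeWhile_le[of _ vs] set_takeWhileD[of w _ vs]
      nth_length_takeWhile[of "\<lambda>u. u \<noteq> w" vs] takeWhile_eq_take[of _ vs]
    by (metis (mono_tags))+
  have "fs ! k \<in> bd w"
    using k w(2) P(1,2) P(6)[of k] by (cases "k < length vs") (auto simp: last_conv_nth)
  then have "face_path Fc W bd fs' vs'"
    using P k f w(1) set_take_subset[of k vs] set_take_subset[of "Suc k" fs]
    by (auto simp: face_path_def fs'_def vs'_def nth_append min_def less_Suc_eq)
  moreover have "hd fs' = hd fs" "last fs' = f"
    using P(1) by (auto simp: fs'_def hd_append)
  moreover have "set fs' \<subseteq> insert f (set fs)" "set vs' \<subseteq> insert w (set vs)"
    using set_take_subset[of k vs] set_take_subset[of "Suc k" fs] by (auto simp: fs'_def vs'_def)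
  ultimately show thesis by (rule that)
qed

locale cell_lattice =
  fixes Vt :: "'x set" and Ed :: "'e set" and Fc :: "'f set" and Vol :: "'v set"
    and ends :: "'e \<Rightarrow> 'x set" and ebd :: "'f \<Rightarrow> 'e set" and fbd :: "'v \<Rightarrow> 'f set"
  assumes lattice: "lattice Vt Ed Fc Vol ends ebd fbd"
begin

abbreviation "vols \<equiv> iota_f Vol fbd"
abbreviation "edge_faces \<equiv> iota_e Fc ebd"
abbreviation "stab \<equiv> tc_stab Ed Fc Vol ebd fbd"
abbreviation "bdry \<equiv> bdry_faces Fc Vol fbd"
abbreviation "classes \<equiv> face_classes Ed Fc Vol ebd fbd"
abbreviation "W \<equiv> aug_vols Ed Fc Vol ebd fbd"
abbreviation "bd \<equiv> aug_bd fbd"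
abbreviation "avols \<equiv> iota_f W bd"

lemma finite_Fc: "finite Fc"
  and finite_Vol: "finite Vol"
  and fbd_subset: "v \<in> Vol \<Longrightarrow> fbd v \<subseteq> Fc"
  and fbd_nonempty: "v \<in> Vol \<Longrightarrow> fbd v \<noteq> {}"
  and card_vols_le: "f \<in> Fc \<Longrightarrow> card (vols f) \<le> 2"
  and ebd_path: "f \<in> Fc \<Longrightarrow> path_bdry ends (ebd f)"
  and ebd_subset: "f \<in> Fc \<Longrightarrow> ebd f \<subseteq> Ed"
  and edge_faces_path: "e \<in> Ed \<Longrightarrow> path_bdry vols (edge_faces e)"
  and no_interior_bdry: "no_interior_bdry Ed Fc Vol ebd fbd"
  and dual_connected: "v \<in> Vol \<Longrightarrow> v' \<in> Vol \<Longrightarrow>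
    (v, v') \<in> {(a, b). a \<in> Vol \<and> b \<in> Vol \<and> fbd a \<inter> fbd b \<noteq> {}}\<^sup>*"
  using lattice unfolding lattice_def by auto

lemma edge_faces_subset: "edge_faces e \<subseteq> Fc"
  by (auto simp: iota_e_def)

lemma finite_edge_faces: "finite (edge_faces e)"
  using finite_subset[OF edge_faces_subset finite_Fc] .

lemma finite_vols: "finite (vols f)"
  using finite_Vol by (simp add: iota_f_def)

lemma vols_nonempty:
  assumes "f \<in> Fc"
  shows "vols f \<noteq> {}"
proof -
  obtain e where "e \<in> ebd f"
    using path_bdry_nonempty[OF ebd_path[OF assms]] by blast
  then have "e \<in> Ed" "f \<in> edge_faces e"
    using assms ebd_subset by (auto simp: iota_e_def)
  then show ?thesis
    using path_bdry_ends_nonempty[OF edge_faces_path] by blast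
qed

lemma card_vols_not_bdry:
  assumes "f \<in> Fc" "f \<notin> bdry"
  shows "card (vols f) = 2"
proof -
  have "card (vols f) \<noteq> 0"
    using assms(1) vols_nonempty finite_vols by simp
  then show ?thesis
    using assms card_vols_le[of f] by (auto simp: bdry_faces_def)
qed

lemma bdry_vol:
  assumes "f \<in> bdry"
  obtains v where "vols f = {v}"
  using assms by (auto simp: bdry_faces_def card_1_singleton_iff)

lemma not_bdry_if_two_vols:
  assumes "v \<in> vols f" "v' \<in> vols f" "v \<noteq> v'"
  shows "f \<notin> bdry"
  using assms by (auto elim: bdry_vol)

lemma face_path_bdry_faces:
  assumes "face_path Fc Vol fbd fs vs"
  shows "set fs \<inter> bdry \<subseteq> {hd fs, last fs}"
  using face_path_inner_face[OF assms] not_bdry_if_two_vols by blast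

lemma edge_vol_even: "e \<in> Ed \<Longrightarrow> v \<in> Vol \<Longrightarrow> even (card (fbd v \<inter> edge_faces e))"
  using path_bdry_even[OF edge_faces_path, of e v]
  by (simp add: iota_f_def Collect_conj_eq Int_commute inf_set_def)

lemma finite_generator: "g \<in> tc_gens Ed Fc Vol ebd fbd \<Longrightarrow> finite (fst g) \<and> finite (snd g)"
  using finite_edge_faces finite_subset[OF fbd_subset finite_Fc] by (auto simp: tc_gens_def)

lemma generators_commute:
  "g \<in> tc_gens Ed Fc Vol ebd fbd \<Longrightarrow> h \<in> tc_gens Ed Fc Vol ebd fbd \<Longrightarrow> commutes g h"
  using edge_vol_even by (auto simp: tc_gens_def commutes_def Int_commute)

lemma generator_commutes_stab:
  assumes "g \<in> tc_gens Ed Fc Vol ebd fbd" "p \<in> stab"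
  shows "commutes g p"
proof -
  have "finite (fst g)" "finite (snd g)"
    using finite_generator[OF assms(1)] by auto
  moreover have "commutes g h" if "h \<in> tc_gens Ed Fc Vol ebd fbd" for h
    using generators_commute[OF assms(1) that] .
  moreover note assms(2)[unfolded tc_stab_def]
  ultimately show ?thesis
    by (rule commutes_gen_group)
qed

lemma stab_subset:
  assumes "p \<in> stab"
  shows "fst p \<subseteq> Fc \<and> snd p \<subseteq> Fc"
  using assms unfolding tc_stab_def
proof induction
  case (mult p g)
  then show ?case
    by (auto simp: tc_gens_def psum_def iota_e_def) (use fbd_subset in blast)
qed simp

lemma edge_stab: "e \<in> Ed \<Longrightarrow> ({}, edge_faces e) \<in> stab"
  unfolding tc_stab_def by (rule gen_group_generator) (auto simp: tc_gens_def)

lemma z_stab_sym_diff: "({}, y) \<in> stab \<Longrightarrow> ({}, y') \<in> stab \<Longrightarrow> ({}, sym_diff y y') \<in> stab"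
  using gen_group_psum[of "({}, y)" _ "({}, y')"] unfolding tc_stab_def by (simp add: psum_def)

lemma z_stab_vol_even: "({}, y) \<in> stab \<Longrightarrow> v \<in> Vol \<Longrightarrow> even (card (fbd v \<inter> y))"
  using generator_commutes_stab[of "(fbd v, {})" "({}, y)"] by (auto simp: tc_gens_def commutes_def)

definition two_cycle :: "'f set \<Rightarrow> bool" where
  "two_cycle S \<longleftrightarrow> S \<subseteq> Fc \<and> (\<forall>e \<in> Ed. even (card (S \<inter> edge_faces e)))"

lemma two_cycle_commutes_stab:
  assumes "two_cycle S" "p \<in> stab"
  shows "commutes (S, {}) p"
proof -
  have "finite S"
    using assms(1) finite_subset[OF _ finite_Fc] by (auto simp: two_cycle_def)
  moreover have "commutes (S, {}) g" if "g \<in> tc_gens Ed Fc Vol ebd fbd" for g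
    using assms(1) that by (auto simp: two_cycle_def tc_gens_def commutes_def)
  ultimately show ?thesis
    using assms(2) commutes_gen_group[of "(S, {})" "tc_gens Ed Fc Vol ebd fbd" p]
    unfolding tc_stab_def by simp
qed

lemma X_stab_or_logical_iff:
  "(S, {}) \<in> stab \<or> tc_logical Ed Fc Vol ebd fbd (S, {}) \<longleftrightarrow> two_cycle S"
proof
  assume X: "(S, {}) \<in> stab \<or> tc_logical Ed Fc Vol ebd fbd (S, {})"
  have "commutes (S, {}) ({}, edge_faces e)" if "e \<in> Ed" for e
  proof -
    have "({}, edge_faces e) \<in> tc_gens Ed Fc Vol ebd fbd"
      using that by (auto simp: tc_gens_def)
    then show ?thesis
      using X generator_commutes_stab edge_stab[OF that] commutes_sym
      unfolding tc_logical_def by blast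
  qed
  moreover have "S \<subseteq> Fc"
    using X stab_subset[of "(S, {})"] by (auto simp: tc_logical_def)
  ultimately show "two_cycle S"
    by (simp add: two_cycle_def commutes_def)
next
  assume "two_cycle S"
  then show "(S, {}) \<in> stab \<or> tc_logical Ed Fc Vol ebd fbd (S, {})"
    using two_cycle_commutes_stab by (auto simp: tc_logical_def two_cycle_def)
qed

definition face_rel :: "('f \<times> 'f) set" where
  "face_rel = {(a, b). face_equiv Ed Fc Vol ebd fbd a b \<or> face_equiv Ed Fc Vol ebd fbd b a}"

lemma sym_face_rel: "sym face_rel"
  by (auto simp: sym_def face_rel_def)

lemma face_rel_rtrancl_sym: "(x, y) \<in> face_rel\<^sup>* \<longleftrightarrow> (y, x) \<in> face_rel\<^sup>*"
  using sym_rtrancl[OF sym_face_rel] by (auto dest: symD)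

lemma classes_iff: "C \<in> classes \<longleftrightarrow> (\<exists>x \<in> bdry. C = face_rel\<^sup>* `` {x})"
  by (simp add: face_classes_def quotient_def face_rel_def)

lemma face_rel_bdry: "(x, y) \<in> face_rel \<Longrightarrow> y \<in> bdry"
  by (auto simp: face_rel_def face_equiv_def[of _ _ _ _ _ x y] face_equiv_def[of _ _ _ _ _ y x])

lemma face_rel_rtrancl_bdry: "(x, y) \<in> face_rel\<^sup>* \<Longrightarrow> x \<in> bdry \<Longrightarrow> y \<in> bdry"
  by (induction rule: rtrancl_induct) (auto dest: face_rel_bdry)

lemma class_subset: "C \<in> classes \<Longrightarrow> C \<subseteq> bdry"
  using face_rel_rtrancl_bdry by (auto simp: classes_iff)

lemma class_eq:
  assumes "C \<in> classes" "f \<in> C"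
  shows "C = face_rel\<^sup>* `` {f}"
proof -
  obtain x where x: "C = face_rel\<^sup>* `` {x}"
    using assms(1) by (auto simp: classes_iff)
  then have xf: "(x, f) \<in> face_rel\<^sup>*"
    using assms(2) by simp
  then have fx: "(f, x) \<in> face_rel\<^sup>*"
    by (rule symD[OF sym_rtrancl[OF sym_face_rel]])
  have "(x, y) \<in> face_rel\<^sup>* \<longleftrightarrow> (f, y) \<in> face_rel\<^sup>*" for y
    using rtrancl_trans[OF xf, of y] rtrancl_trans[OF fx, of y] by blast
  then show ?thesis
    unfolding x by auto
qed

lemma class_closed:
  assumes "C \<in> classes" "a \<in> C" "(a, b) \<in> face_rel\<^sup>*"
  shows "b \<in> C"
  using class_eq[OF assms(1,2)] assms(3) by simp

lemma classes_containing:
  "{C \<in> classes. f \<in> C} = (if f \<in> bdry then {face_rel\<^sup>* `` {f}} else {})"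
proof (cases "f \<in> bdry")
  case True
  then have "face_rel\<^sup>* `` {f} \<in> classes" "f \<in> face_rel\<^sup>* `` {f}"
    by (auto simp: classes_iff)
  then have "C \<in> classes \<and> f \<in> C \<longleftrightarrow> C = face_rel\<^sup>* `` {f}" for C
    using class_eq[of C f] by blast
  then show ?thesis
    using True by auto
next
  case False
  then show ?thesis
    using class_subset by auto
qed

lemma class_edge_faces_even:
  assumes C: "C \<in> classes" and e: "e \<in> Ed"
  shows "even (card (C \<inter> edge_faces e))"
  using edge_faces_path[OF e] unfolding path_bdry_def
proof
  assume "closed_path vols (edge_faces e)"
  then have "edge_faces e \<inter> bdry = {}"
    using closed_path_card_ends[of vols "edge_faces e"] by (auto simp: bdry_faces_def)
  then have "C \<inter> edge_faces e = {}"
    using class_subset[OF C] by blast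
  then show ?thesis by simp
next
  \<comment> \<open>the two end faces of the open dual path are the only boundary faces in it, and they are
    face-equivalent via the path itself, whose Z-operator is the stabilizer B_e\<close>
  assume "open_path vols (edge_faces e)"
  then obtain fs vs where path: "face_path Fc Vol fbd fs vs" "set fs = edge_faces e"
    "hd fs \<noteq> last fs" "card (vols (hd fs)) = 1" "card (vols (last fs)) = 1"
    using edge_faces_subset by (rule open_path_face_path)
  have fs: "fs \<noteq> []" "set fs \<subseteq> Fc"
    using path(1) by (auto simp: face_path_def)
  then have ends_bdry: "hd fs \<in> bdry" "last fs \<in> bdry"
    using path(4,5) by (auto simp: bdry_faces_def)
  then have "face_equiv Ed Fc Vol ebd fbd (hd fs) (last fs)"
    using path(1,2) edge_stab[OF e] unfolding face_equiv_def
    by (intro conjI disjI2 exI[of _ fs] exI[of _ vs]) simp_all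
  then have "(hd fs, last fs) \<in> face_rel"
    by (simp add: face_rel_def)
  then have "(hd fs, last fs) \<in> face_rel\<^sup>*" "(last fs, hd fs) \<in> face_rel\<^sup>*"
    using face_rel_rtrancl_sym[of "hd fs" "last fs"] by auto
  then have "hd fs \<in> C \<longleftrightarrow> last fs \<in> C"
    using class_closed[OF C] by blast
  moreover have "C \<inter> edge_faces e \<subseteq> {hd fs, last fs}"
    using face_path_bdry_faces[OF path(1)] path(2) class_subset[OF C] by blast
  moreover have "hd fs \<in> edge_faces e" "last fs \<in> edge_faces e"
    using hd_in_set[OF fs(1)] last_in_set[OF fs(1)] path(2) by blast+
  ultimately have "C \<inter> edge_faces e = {} \<or> C \<inter> edge_faces e = {hd fs, last fs}"
    by blast
  then show ?thesis
    using path(3) by (elim disjE) simp_all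
qed

lemma Inl_in_W [simp]: "Inl v \<in> W \<longleftrightarrow> v \<in> Vol"
  and Inr_in_W [simp]: "Inr C \<in> W \<longleftrightarrow> C \<in> classes"
  and bd_Inl [simp]: "bd (Inl v) = fbd v"
  and bd_Inr [simp]: "bd (Inr C) = C"
  by (auto simp: aug_vols_def aug_bd_def)

lemma aug_vols_cases:
  assumes "w \<in> W"
  obtains v where "w = Inl v" "v \<in> Vol" | C where "w = Inr C" "C \<in> classes"
  using assms by (cases w) auto

lemma avols_eq: "avols f = Inl ` vols f \<union> Inr ` {C \<in> classes. f \<in> C}"
  unfolding iota_f_def aug_vols_def aug_bd_def by force

lemma mem_avols: "w \<in> avols f \<longleftrightarrow> w \<in> W \<and> f \<in> bd w"
  by (simp add: iota_f_def)

lemma card_avols: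
  assumes "f \<in> Fc"
  shows "card (avols f) = 2"
proof (cases "f \<in> bdry")
  case True
  then obtain v where "vols f = {v}"
    by (rule bdry_vol)
  then have "avols f = {Inl v, Inr (face_rel\<^sup>* `` {f})}"
    using True by (auto simp: avols_eq classes_containing)
  then show ?thesis by simp
next
  case False
  then have "avols f = Inl ` vols f"
    by (simp add: avols_eq classes_containing)
  then show ?thesis
    using card_vols_not_bdry[OF assms False] by (simp add: card_image)
qed

lemma avols_other:
  assumes "f \<in> Fc" "w \<in> avols f"
  obtains w' where "avols f = {w, w'}" "w' \<noteq> w"
proof -
  obtain a b where ab: "avols f = {a, b}" "a \<noteq> b"
    using card_avols[OF assms(1)] by (auto simp: card_2_iff)
  show thesis
  proof (cases "w = a")
    case True
    then show ?thesis using ab by (intro that[of b]) auto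
  next
    case False
    then have "w = b" using ab(1) assms(2) by auto
    then show ?thesis using ab by (intro that[of a]) (auto simp: insert_commute)
  qed
qed

lemma finite_W: "finite W"
proof -
  have "classes \<subseteq> Pow Fc"
    using class_subset by (auto simp: bdry_faces_def)
  then have "finite classes"
    using finite_Fc by (simp add: finite_subset)
  then show ?thesis
    using finite_Vol by (simp add: aug_vols_def)
qed

lemma bd_subset: "w \<in> W \<Longrightarrow> bd w \<subseteq> Fc"
  by (elim aug_vols_cases) (use fbd_subset class_subset in \<open>auto simp: bdry_faces_def\<close>)

lemma bd_nonempty: "w \<in> W \<Longrightarrow> bd w \<noteq> {}"
  by (elim aug_vols_cases) (use fbd_nonempty in \<open>auto simp: classes_iff\<close>)

lemma two_cycle_bd:
  assumes "w \<in> W"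
  shows "two_cycle (bd w)"
  using assms bd_subset[OF assms]
  by (elim aug_vols_cases) (auto simp: two_cycle_def edge_vol_even class_edge_faces_even)

lemma face_rel_stab:
  assumes "(a, b) \<in> face_rel" "a \<noteq> b"
  shows "{a, b} \<in> {y \<inter> bdry | y. ({}, y) \<in> stab}"
proof -
  have "face_equiv Ed Fc Vol ebd fbd a b \<or> face_equiv Ed Fc Vol ebd fbd b a"
    using assms(1) by (simp add: face_rel_def)
  then obtain x x' where x: "face_equiv Ed Fc Vol ebd fbd x x'" "{x, x'} = {a, b}"
    using insert_commute[of b a "{}"] by blast
  then obtain fs vs where path: "face_path Fc Vol fbd fs vs" "hd fs = x" "last fs = x'"
    "({}, set fs) \<in> stab" and ends: "x \<in> bdry" "x' \<in> bdry"
    using assms(2) unfolding face_equiv_def by auto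
  have "fs \<noteq> []"
    using path(1) by (simp add: face_path_def)
  then have "set fs \<inter> bdry = {x, x'}"
    using face_path_bdry_faces[OF path(1)] path(2,3) ends by auto
  then show ?thesis
    using path(4) x(2) by (intro CollectI exI[of _ "set fs"]) simp
qed

definition aug_dual_cycle :: "'f set \<Rightarrow> bool" where
  "aug_dual_cycle z \<longleftrightarrow> z \<subseteq> Fc \<and> (\<forall>w \<in> W. even (card (bd w \<inter> z)))"

lemma aug_dual_cycle_bdry_stab:
  assumes cycle: "aug_dual_cycle z"
  obtains y where "({}, y) \<in> stab" "y \<inter> bdry = z \<inter> bdry"
proof -
  let ?Q = "{y \<inter> bdry | y. ({}, y) \<in> stab}"
  have "z \<inter> bdry \<in> ?Q"
  proof (rule sym_diff_closed_even_sets[where r = face_rel])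
    have "({}, {}) \<in> stab"
      unfolding tc_stab_def by (rule gen_group.one)
    then show "{} \<in> ?Q" by blast
  next
    fix A B assume "A \<in> ?Q" "B \<in> ?Q"
    then obtain y y' where "({}, y) \<in> stab" "({}, y') \<in> stab" "A = y \<inter> bdry" "B = y' \<inter> bdry"
      by blast
    then show "sym_diff A B \<in> ?Q"
      using z_stab_sym_diff by (intro CollectI exI[of _ "sym_diff y y'"]) blast
  next
    fix a b assume "(a, b) \<in> face_rel" "a \<noteq> b"
    then show "{a, b} \<in> ?Q"
      by (rule face_rel_stab)
  next
    show "\<forall>x \<in> z \<inter> bdry. even (card (z \<inter> bdry \<inter> face_rel\<^sup>* `` {x}))"
    proof
      fix x assume "x \<in> z \<inter> bdry"
      then have C: "face_rel\<^sup>* `` {x} \<in> classes"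
        by (auto simp: classes_iff)
      then have "Inr (face_rel\<^sup>* `` {x}) \<in> W"
        by simp
      then have "even (card (bd (Inr (face_rel\<^sup>* `` {x})) \<inter> z))"
        using cycle unfolding aug_dual_cycle_def by blast
      moreover have "z \<inter> bdry \<inter> face_rel\<^sup>* `` {x} = bd (Inr (face_rel\<^sup>* `` {x})) \<inter> z"
        using class_subset[OF C] by auto
      ultimately show "even (card (z \<inter> bdry \<inter> face_rel\<^sup>* `` {x}))"
        by simp
    qed
  qed (use cycle finite_subset[OF _ finite_Fc] sym_face_rel in \<open>auto simp: aug_dual_cycle_def\<close>)
  then show thesis
    using that by blast
qed

lemma aug_dual_cycle_stab:
  assumes cycle: "aug_dual_cycle z"
  shows "({}, z) \<in> stab"
proof -
  obtain y where y: "({}, y) \<in> stab" "y \<inter> bdry = z \<inter> bdry"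
    using aug_dual_cycle_bdry_stab[OF cycle] .
  \<comment> \<open>z + y is a dual cycle avoiding the boundary, hence a stabilizer by (L1)\<close>
  have "even (card (sym_diff z y \<inter> fbd v))" if "v \<in> Vol" for v
  proof -
    have "even (card (fbd v \<inter> z))"
      using cycle that unfolding aug_dual_cycle_def by (metis Inl_in_W bd_Inl)
    then have "even (card (fbd v \<inter> sym_diff z y))"
      using z_stab_vol_even[OF y(1) that] finite_subset[OF fbd_subset[OF that] finite_Fc]
      by (simp add: even_card_Int_sym_diff)
    then show ?thesis by (simp add: Int_commute)
  qed
  moreover have "sym_diff z y \<subseteq> Fc" "sym_diff z y \<inter> bdry = {}"
    using cycle stab_subset[OF y(1)] y(2) by (auto simp: aug_dual_cycle_def)
  ultimately have "({}, sym_diff z y) \<in> stab"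
    using no_interior_bdry unfolding no_interior_bdry_def by blast
  then have "({}, sym_diff (sym_diff z y) y) \<in> stab"
    using y(1) by (rule z_stab_sym_diff)
  moreover have "sym_diff (sym_diff z y) y = z"
    by blast
  ultimately show ?thesis by simp
qed

definition aug_dual_walk :: "('v + 'f set) list \<Rightarrow> 'f list \<Rightarrow> bool" where
  "aug_dual_walk us fs \<longleftrightarrow> length us = Suc (length fs) \<and> set us \<subseteq> W \<and> set fs \<subseteq> Fc \<and>
     (\<forall>i < length fs. us ! i \<noteq> us ! Suc i \<and> fs ! i \<in> bd (us ! i) \<and> fs ! i \<in> bd (us ! Suc i))"

lemma aug_dual_walk_avols:
  assumes "aug_dual_walk us fs" "i < length fs"
  shows "avols (fs ! i) = {us ! i, us ! Suc i}"
proof -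
  have "{us ! i, us ! Suc i} \<subseteq> avols (fs ! i)" "us ! i \<noteq> us ! Suc i" "fs ! i \<in> Fc"
    using assms by (auto simp: aug_dual_walk_def mem_avols)
  moreover have "finite (avols (fs ! i))"
    using finite_W by (simp add: iota_f_def)
  ultimately show ?thesis
    using card_avols by (intro card_subset_eq[symmetric]) auto
qed

lemma aug_dual_walk_parity:
  assumes walk: "aug_dual_walk us fs" and w: "w \<in> W"
  shows "even (card (bd w \<inter> mod2_sum fs)) \<longleftrightarrow> (hd us = w \<longleftrightarrow> last us = w)"
proof -
  have len: "length us = Suc (length fs)"
    using walk by (simp add: aug_dual_walk_def)
  \<comment> \<open>a face of the walk lies on w iff the walk enters or leaves w through it\<close>
  have "fs ! i \<in> bd w \<longleftrightarrow> (us ! i = w) \<noteq> (us ! Suc i = w)" if "i < length fs" for i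
  proof -
    have "fs ! i \<in> bd w \<longleftrightarrow> w \<in> avols (fs ! i)"
      using w by (simp add: mem_avols)
    also have "\<dots> \<longleftrightarrow> w = us ! i \<or> w = us ! Suc i"
      using aug_dual_walk_avols[OF walk that] by auto
    also have "\<dots> \<longleftrightarrow> (us ! i = w) \<noteq> (us ! Suc i = w)"
      using walk that by (auto simp: aug_dual_walk_def)
    finally show ?thesis .
  qed
  then have "{i. i < length fs \<and> fs ! i \<in> bd w} =
      {i. i < length fs \<and> (us ! i = w) \<noteq> (us ! Suc i = w)}"
    by blast
  then have "even (length (filter (\<lambda>x. x \<in> bd w) fs)) \<longleftrightarrow> (us ! 0 = w \<longleftrightarrow> us ! length fs = w)"
    using even_card_switches_iff[of "length fs" "\<lambda>i. us ! i = w"] by (simp add: length_filter_conv_card)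
  moreover have "us \<noteq> []"
    using len by auto
  then have "hd us = us ! 0" "last us = us ! length fs"
    using len by (simp_all add: hd_conv_nth last_conv_nth)
  ultimately show ?thesis
    by (simp add: even_card_Int_mod2_sum)
qed

lemma closed_aug_dual_walk_cycle:
  assumes "aug_dual_walk us fs" "hd us = last us"
  shows "aug_dual_cycle (mod2_sum fs)"
proof -
  have "even (card (bd w \<inter> mod2_sum fs))" if "w \<in> W" for w
    using aug_dual_walk_parity[OF assms(1) that] assms(2) by simp
  moreover have "mod2_sum fs \<subseteq> Fc"
    using assms(1) mod2_sum_subset[of fs] by (auto simp: aug_dual_walk_def)
  ultimately show ?thesis
    by (simp add: aug_dual_cycle_def)
qed

lemma aug_dual_walk_Cons:
  assumes "aug_dual_walk us fs" "u \<in> W" "f \<in> Fc" "f \<in> bd u" "f \<in> bd (hd us)" "u \<noteq> hd us"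
  shows "aug_dual_walk (u # us) (f # fs)"
proof -
  have "us \<noteq> []"
    using assms(1) by (auto simp: aug_dual_walk_def)
  then have "hd us = us ! 0"
    by (simp add: hd_conv_nth)
  then show ?thesis
    using assms by (auto simp: aug_dual_walk_def nth_Cons' less_Suc_eq_0_disj)
qed

lemma face_path_aug_dual_walk:
  assumes path: "face_path Fc W bd fs vs" and ab: "a \<in> W" "b \<in> W" "a \<noteq> b"
    and avoid: "a \<notin> set vs" "b \<notin> set vs" and ends: "hd fs \<in> bd a" "last fs \<in> bd b"
  shows "aug_dual_walk (a # vs @ [b]) fs"
proof -
  have P: "fs \<noteq> []" "length vs = length fs - 1" "distinct vs" "set vs \<subseteq> W" "set fs \<subseteq> Fc"
    "\<And>i. i < length vs \<Longrightarrow> fs ! i \<in> bd (vs ! i) \<and> fs ! Suc i \<in> bd (vs ! i)"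
    using path unfolding face_path_def by auto
  define us where "us = a # vs @ [b]"
  have len: "length us = Suc (length fs)"
    using P(1,2) by (simp add: us_def)
  have "distinct us"
    using P(3) ab(3) avoid by (simp add: us_def)
  then have "us ! i \<noteq> us ! Suc i" if "i < length fs" for i
    using that len by (simp add: nth_eq_iff_index_eq)
  moreover have "fs ! i \<in> bd (us ! i)" if "i < length fs" for i
    using that ends(1) P(1,2) P(6)[of "i - 1"]
    by (cases i) (auto simp: us_def nth_append hd_conv_nth)
  moreover have "fs ! i \<in> bd (us ! Suc i)" if "i < length fs" for i
  proof (cases "i < length vs")
    case True
    then show ?thesis using P(6)[of i] by (simp add: us_def nth_append)
  next
    case False
    then have "i = length fs - 1"
      using that P(2) by simp
    then show ?thesis
      using ends(2) P(1,2) by (simp add: us_def nth_append last_conv_nth)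
  qed
  ultimately show ?thesis
    using len P(4,5) ab unfolding us_def aug_dual_walk_def by auto
qed

lemma two_cycle_cut_set:
  assumes S: "two_cycle S" "S \<noteq> {}" "S \<subseteq> E"
  shows "cut_set Fc W bd E"
proof -
  obtain f where f: "f \<in> S" "f \<in> Fc"
    using S(1,2) by (auto simp: two_cycle_def)
  obtain a where "a \<in> avols f"
    using card_avols[OF f(2)] by fastforce
  then obtain b where ab: "avols f = {a, b}" "b \<noteq> a"
    by (rule avols_other[OF f(2)])
  then have "a \<in> avols f" "b \<in> avols f"
    by auto
  then have a: "a \<in> W" "f \<in> bd a" and b: "b \<in> W" "f \<in> bd b"
    by (simp_all add: mem_avols)
  have "E \<inter> set fs \<noteq> {}"
    if path: "face_path Fc W bd fs vs" "hd fs \<in> bd a" "last fs \<in> bd b" "a \<notin> set vs" "b \<notin> set vs"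
    for fs vs
  proof
    assume avoid: "E \<inter> set fs = {}"
    \<comment> \<open>closing the path with f gives a dual cycle of the augmented lattice meeting S only in f\<close>
    have "aug_dual_walk (b # a # vs @ [b]) (f # fs)"
      using face_path_aug_dual_walk[OF path(1) a(1) b(1) ab(2)[symmetric] path(4,5,2,3)] b a f(2) ab(2)
      by (intro aug_dual_walk_Cons) auto
    then have "({}, mod2_sum (f # fs)) \<in> stab"
      by (intro aug_dual_cycle_stab closed_aug_dual_walk_cycle) auto
    then have "even (card (S \<inter> mod2_sum (f # fs)))"
      using two_cycle_commutes_stab[OF S(1)] by (auto simp: commutes_def)
    moreover have "x \<notin> set fs" if "x \<in> S" for x
      using that avoid S(3) by blast
    then have "S \<inter> mod2_sum (f # fs) = {f}"
      using f(1) by (auto simp: mod2_sum_def)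
    ultimately show False by simp
  qed
  then show ?thesis
    unfolding cut_set_def using a(1) b(1) by blast
qed

definition vol_bdry :: "('v + 'f set) set \<Rightarrow> 'f set" where
  "vol_bdry U = {f \<in> Fc. odd (card (avols f \<inter> U))}"

lemma vol_bdry_iff:
  assumes "U \<subseteq> W"
  shows "f \<in> vol_bdry U \<longleftrightarrow> (\<exists>a \<in> U. \<exists>b \<in> W - U. f \<in> bd a \<and> f \<in> bd b)"
proof
  assume f: "f \<in> vol_bdry U"
  then have "f \<in> Fc" "avols f \<inter> U \<noteq> {}"
    by (auto simp: vol_bdry_def)
  then obtain a b where ab: "a \<in> U" "avols f = {a, b}" "b \<noteq> a"
    by (metis Int_emptyI avols_other)
  then have "b \<notin> U"
    using f by (auto simp: vol_bdry_def)
  moreover have "a \<in> avols f" "b \<in> avols f"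
    using ab(2) by auto
  ultimately show "\<exists>a \<in> U. \<exists>b \<in> W - U. f \<in> bd a \<and> f \<in> bd b"
    using ab(1) by (auto simp: mem_avols)
next
  assume "\<exists>a \<in> U. \<exists>b \<in> W - U. f \<in> bd a \<and> f \<in> bd b"
  then obtain a b where ab: "a \<in> U" "b \<in> W - U" "f \<in> bd a" "f \<in> bd b"
    by blast
  then have f: "f \<in> Fc" "a \<in> avols f"
    using assms bd_subset by (auto simp: mem_avols)
  then obtain b' where "avols f = {a, b'}" "b' \<noteq> a"
    by (rule avols_other)
  moreover have "b \<in> avols f"
    using ab by (simp add: mem_avols)
  ultimately have "avols f \<inter> U = {a}"
    using ab(1,2) by auto
  then show "f \<in> vol_bdry U"
    using f by (simp add: vol_bdry_def)
qed

lemma vol_bdry_insert: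
  assumes "w \<notin> U" "w \<in> W"
  shows "vol_bdry (insert w U) = sym_diff (vol_bdry U) (bd w)"
proof -
  have "finite (avols f)" for f
    using finite_W by (simp add: iota_f_def)
  moreover have "f \<in> bd w \<longleftrightarrow> w \<in> avols f" for f
    using assms(2) by (simp add: mem_avols)
  ultimately show ?thesis
    using assms bd_subset[OF assms(2)] by (auto simp: vol_bdry_def Int_insert_right)
qed

lemma two_cycle_sym_diff:
  assumes "two_cycle A" "two_cycle B"
  shows "two_cycle (sym_diff A B)"
  unfolding two_cycle_def
proof (intro conjI ballI)
  show "sym_diff A B \<subseteq> Fc"
    using assms by (auto simp: two_cycle_def)
next
  fix e assume "e \<in> Ed"
  then have "even (card (edge_faces e \<inter> A))" "even (card (edge_faces e \<inter> B))"
    using assms by (simp_all add: two_cycle_def Int_commute)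
  then have "even (card (edge_faces e \<inter> sym_diff A B))"
    using finite_edge_faces by (simp add: even_card_Int_sym_diff)
  then show "even (card (sym_diff A B \<inter> edge_faces e))"
    by (simp add: Int_commute)
qed

lemma two_cycle_vol_bdry:
  assumes "finite U" "U \<subseteq> W"
  shows "two_cycle (vol_bdry U)"
  using assms
proof induction
  case empty
  show ?case by (simp add: vol_bdry_def two_cycle_def)
next
  case (insert w U)
  then show ?case
    by (simp add: vol_bdry_insert two_cycle_sym_diff two_cycle_bd)
qed

lemma aug_connected:
  assumes "a \<in> W" "b \<in> W"
  shows "(a, b) \<in> {(a, b). a \<in> W \<and> b \<in> W \<and> bd a \<inter> bd b \<noteq> {}}\<^sup>*"
    (is "_ \<in> ?adj\<^sup>*")
proof -
  have vols_connected: "(Inl x, Inl y) \<in> ?adj\<^sup>*" if "x \<in> Vol" "y \<in> Vol" for x y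
    using dual_connected[OF that]
  proof induction
    case (step y z)
    then have "(Inl y, Inl z) \<in> ?adj"
      by simp
    with step.IH show ?case
      by (rule rtrancl_into_rtrancl)
  qed simp
  have near_old: "\<exists>x \<in> Vol. (w, Inl x) \<in> ?adj\<^sup>* \<and> (Inl x, w) \<in> ?adj\<^sup>*" if "w \<in> W" for w
    using that
  proof (cases rule: aug_vols_cases)
    case (2 C)
    then obtain g where "g \<in> C"
      by (auto simp: classes_iff)
    then have "g \<in> bdry"
      using class_subset[OF 2(2)] by blast
    then obtain x where "vols g = {x}"
      by (rule bdry_vol)
    then have "x \<in> Vol" "g \<in> fbd x"
      by (auto simp: iota_f_def)
    then have "(w, Inl x) \<in> ?adj" "(Inl x, w) \<in> ?adj"
      using 2 \<open>g \<in> C\<close> by auto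
    then show ?thesis
      using \<open>x \<in> Vol\<close> by blast
  qed auto
  obtain x y where "x \<in> Vol" "(a, Inl x) \<in> ?adj\<^sup>*" "y \<in> Vol" "(Inl y, b) \<in> ?adj\<^sup>*"
    using near_old[OF assms(1)] near_old[OF assms(2)] by blast
  then show ?thesis
    using vols_connected by (meson rtrancl_trans)
qed

definition cross_step :: "('v + 'f set) \<Rightarrow> 'f set \<Rightarrow> (('v + 'f set) \<times> ('v + 'f set)) set" where
  "cross_step v' E = {(a, b). a \<in> W \<and> b \<in> W \<and> a \<noteq> v' \<and> (\<exists>g \<in> bd a \<inter> bd b. g \<notin> E)}"

lemma cross_step_face_path:
  assumes "(v, w) \<in> (cross_step v' E)\<^sup>*" "w \<noteq> v"
  obtains fs vs where "face_path Fc W bd fs vs" "hd fs \<in> bd v" "last fs \<in> bd w"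
    "v \<notin> set vs" "v' \<notin> set vs" "E \<inter> set fs = {}"
proof -
  have "w = v \<or> (\<exists>fs vs. face_path Fc W bd fs vs \<and> hd fs \<in> bd v \<and> last fs \<in> bd w \<and>
      v \<notin> set vs \<and> v' \<notin> set vs \<and> E \<inter> set fs = {})"
    using assms(1)
  proof induction
    case (step w w')
    then obtain g where g: "g \<in> bd w" "g \<in> bd w'" "g \<notin> E" "w \<in> W" "w \<noteq> v'"
      by (auto simp: cross_step_def)
    then have gF: "g \<in> Fc"
      using bd_subset by blast
    show ?case
    proof (cases "w = v")
      case True
      then have "face_path Fc W bd [g] []" "hd [g] \<in> bd v" "last [g] \<in> bd w'" "E \<inter> set [g] = {}"
        using g gF by (auto simp: face_path_def)
      then show ?thesis
        by (intro disjI2 exI[of _ "[g]"] exI[of _ "[]"]) simp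
    next
      case False
      then obtain fs vs where fs: "face_path Fc W bd fs vs" "hd fs \<in> bd v" "last fs \<in> bd w"
        "v \<notin> set vs" "v' \<notin> set vs" "E \<inter> set fs = {}"
        using step.IH by blast
      obtain fs' vs' where "face_path Fc W bd fs' vs'" "hd fs' = hd fs" "last fs' = g"
        "set fs' \<subseteq> insert g (set fs)" "set vs' \<subseteq> insert w (set vs)"
        by (rule face_path_extend[OF fs(1) g(4) fs(3) g(1) gF])
      then show ?thesis
        using fs g False by (intro disjI2 exI[of _ fs'] exI[of _ vs']) auto
    qed
  qed simp
  then show thesis
    using assms(2) that by blast
qed

lemma cut_set_two_cycle:
  assumes "cut_set Fc W bd E"
  obtains S where "S \<noteq> {}" "S \<subseteq> E" "two_cycle S"
proof -
  obtain v v' where v: "v \<in> W" "v' \<in> W"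
    and cut: "\<And>fs vs. face_path Fc W bd fs vs \<Longrightarrow> hd fs \<in> bd v \<Longrightarrow> last fs \<in> bd v' \<Longrightarrow>
      v \<notin> set vs \<Longrightarrow> v' \<notin> set vs \<Longrightarrow> E \<inter> set fs \<noteq> {}"
    using assms unfolding cut_set_def by blast
  show thesis
  proof (cases "v = v'")
    case True
    \<comment> \<open>each single face of v is a path from v to v'\<close>
    have "g \<in> E" if "g \<in> bd v" for g
      using cut[of "[g]" "[]"] that True bd_subset[OF v(1)] by (auto simp: face_path_def)
    then show thesis
      using that bd_nonempty[OF v(1)] two_cycle_bd[OF v(1)] by blast
  next
    case False
    \<comment> \<open>take the boundary of the volumes reachable from v without crossing E or entering v'\<close>
    define U where "U = (cross_step v' E)\<^sup>* `` {v}"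
    have vU: "v \<in> U"
      by (simp add: U_def)
    have v'U: "v' \<notin> U"
      using cross_step_face_path[of v v' v' E] cut False by (auto simp: U_def)
    have U_W: "U \<subseteq> W"
    proof
      fix w assume "w \<in> U"
      then have "(v, w) \<in> (cross_step v' E)\<^sup>*"
        by (simp add: U_def)
      then show "w \<in> W"
        using v(1) by (induction rule: rtrancl_induct) (auto simp: cross_step_def)
    qed
    obtain a b where "(a, b) \<in> {(a, b). a \<in> W \<and> b \<in> W \<and> bd a \<inter> bd b \<noteq> {}}"
      "a \<in> U" "b \<notin> U"
      by (rule rtrancl_crossing[OF aug_connected[OF v] vU v'U])
    then have "vol_bdry U \<noteq> {}"
      using vol_bdry_iff[OF U_W] by blast
    moreover have "vol_bdry U \<subseteq> E"
    proof
      fix f assume "f \<in> vol_bdry U"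
      then obtain a b where ab: "a \<in> U" "b \<in> W - U" "f \<in> bd a" "f \<in> bd b"
        using vol_bdry_iff[OF U_W] by blast
      then have "(a, b) \<notin> cross_step v' E"
        by (auto simp: U_def intro: rtrancl_into_rtrancl)
      then show "f \<in> E"
        using ab v'U U_W by (auto simp: cross_step_def)
    qed
    moreover have "two_cycle (vol_bdry U)"
      using U_W finite_subset[OF U_W finite_W] by (intro two_cycle_vol_bdry)
    ultimately show thesis
      by (rule that)
  qed
qed

end

theorem lemma6:
  fixes Vt :: "'x set" and Ed :: "'e set" and Fc :: "'f set" and Vol :: "'v set"
    and ends :: "'e \<Rightarrow> 'x set" and ebd :: "'f \<Rightarrow> 'e set" and fbd :: "'v \<Rightarrow> 'f set"
    and \<E> :: "'f set"
  assumes "lattice Vt Ed Fc Vol ends ebd fbd"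
    and "\<E> \<subseteq> Fc"
  shows "cut_set Fc (aug_vols Ed Fc Vol ebd fbd) (aug_bd fbd) \<E> \<longleftrightarrow>
         (\<exists>S. S \<noteq> {} \<and> S \<subseteq> \<E> \<and>
              ((S, {}) \<in> tc_stab Ed Fc Vol ebd fbd \<or> tc_logical Ed Fc Vol ebd fbd (S, {})))"
proof -
  interpret cell_lattice Vt Ed Fc Vol ends ebd fbd
    using assms(1) by unfold_locales
  show ?thesis
    unfolding X_stab_or_logical_iff
    using cut_set_two_cycle two_cycle_cut_set by metis
qed

end
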